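(* Let $n\ge1$ be an integer. Suppose there exists $p>1$ such that for every $s>\frac{n}{2(n+1)}$ there is $C_s$ with $$\Big\|\sup_{0<t<1}|e^{it\Delta}f(x)|\Big\|_{L^p(B(0,1))}\le C_s\|f\|_{H^s(\mathbb{R}^n)}\quad\text{for all }f\in H^s(\mathbb{R}^n).$$ Then $p\le\frac{2(n+1)}{n}$.
   Context: For $f$ on $\mathbb{R}^n$, $e^{it\Delta}f(x):=\int_{\mathbb{R}^n}e^{i(x\cdot\xi+t|\xi|^2)}\hat f(\xi)\,d\xi$; $H^s(\mathbb{R}^n)$ is the $L^2$-based Sobolev space; $B(0,1)$ is the unit ball in $\mathbb{R}^n$. *)

theory Defs
  imports "HOL-Analysis.Analysis"
begin

text \<open>Functions on R^n are represented via their Fourier transform g = f-hat.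
  The Schroedinger evolution is e^{it Delta} f (x) = integral of
  e^{i(x.xi + t|xi|^2)} g(xi) d xi.\<close>

definition schrod :: "(real ^ 'n \<Rightarrow> complex) \<Rightarrow> real \<Rightarrow> real ^ 'n \<Rightarrow> complex" where
  "schrod g t x = integral\<^sup>L lborel (\<lambda>\<xi>. cis (x \<bullet> \<xi> + t * (norm \<xi>)\<^sup>2) * g \<xi>)"

definition schrod_max :: "(real ^ 'n \<Rightarrow> complex) \<Rightarrow> real ^ 'n \<Rightarrow> ennreal" where
  "schrod_max g x = (SUP t\<in>{0<..<1}. ennreal (cmod (schrod g t x)))"

definition ennpowr :: "ennreal \<Rightarrow> real \<Rightarrow> ennreal" where
  "ennpowr a p = (if a = top then top else ennreal (enn2real a powr p))"

definition Lp_norm_on :: "real \<Rightarrow> 'a::euclidean_space set \<Rightarrow> ('a \<Rightarrow> ennreal) \<Rightarrow> ennreal" where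
  "Lp_norm_on p S F =
     (let I = (\<integral>\<^sup>+ x \<in> S. ennpowr (F x) p \<partial>lborel) in
      ennpowr I (1 / p))"

definition in_Hs :: "real \<Rightarrow> (real ^ 'n \<Rightarrow> complex) \<Rightarrow> bool" where
  "in_Hs s g \<longleftrightarrow> g \<in> borel_measurable lborel \<and>
     integrable lborel (\<lambda>\<xi>. (1 + (norm \<xi>)\<^sup>2) powr s * (cmod (g \<xi>))\<^sup>2)"

definition Hs_norm :: "real \<Rightarrow> (real ^ 'n \<Rightarrow> complex) \<Rightarrow> real" where
  "Hs_norm s g = sqrt (integral\<^sup>L lborel (\<lambda>\<xi>. (1 + (norm \<xi>)\<^sup>2) powr s * (cmod (g \<xi>))\<^sup>2))"

end

theory Submission
  imports Defs
begin

text \<open>Knapp-type example: let f-hat be the indicator of the ball of radius R. For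
  |x| \<le> 1/(2R) and t = 1/(2R^2) the phase x\<cdot>\<xi> + t|\<xi>|^2 stays in [-1,1] on that ball,
  so the integral defining the evolution has no cancellation and the maximal function is at
  least cos 1 \<cdot> |B_R| ~ R^n on a ball of measure ~ R^-n. Hence its L^p norm is at least of
  order R^(n - n/p), while the H^s norm of f is at most of order R^(s + n/2). Letting
  R \<rightarrow> \<infinity> gives n - n/p \<le> s + n/2 for every admissible s, i.e. n/2 - n/p \<le> n/(2(n+1)),
  which is p \<le> 2(n+1)/n.\<close>

lemma cos_one_le_cos: "\<bar>y :: real\<bar> \<le> 1 \<Longrightarrow> cos 1 \<le> cos y"
  using pi_gt3 cos_monotone_0_pi_le[of "\<bar>y\<bar>" 1] by simp

lemma cos_one_gt_zero: "cos (1 :: real) > 0"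
  using pi_gt3 by (intro cos_gt_zero) auto

lemma cos_one_measure_le_cmod_schrod:
  fixes S :: "(real ^ 'n) set"
  assumes "compact S" and phase: "\<And>\<xi>. \<xi> \<in> S \<Longrightarrow> \<bar>x \<bullet> \<xi> + t * (norm \<xi>)\<^sup>2\<bar> \<le> 1"
  shows "cos 1 * measure lborel S \<le> cmod (schrod (indicator S) t x)"
proof -
  let ?\<phi> = "\<lambda>\<xi>. x \<bullet> \<xi> + t * (norm \<xi>)\<^sup>2"
  have integrable: "integrable lborel (\<lambda>\<xi>. indicator S \<xi> *\<^sub>R cis (?\<phi> \<xi>))"
    using \<open>compact S\<close> by (intro borel_integrable_compact continuous_intros)
  have "cos 1 * measure lborel S = integral\<^sup>L lborel (\<lambda>\<xi>. indicator S \<xi> * cos (1 :: real))"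
    by simp
  also have "\<dots> \<le> integral\<^sup>L lborel (\<lambda>\<xi>. indicator S \<xi> * cos (?\<phi> \<xi>))"
  proof (rule integral_mono)
    show "integrable lborel (\<lambda>\<xi>. indicator S \<xi> * cos (1 :: real))"
      using borel_integrable_compact[OF \<open>compact S\<close>, of "\<lambda>_. cos (1 :: real)"]
      by (simp add: mult.commute)
    show "integrable lborel (\<lambda>\<xi>. indicator S \<xi> * cos (?\<phi> \<xi>))"
      using borel_integrable_compact[OF \<open>compact S\<close>, of "\<lambda>\<xi>. cos (?\<phi> \<xi>)"]
      by (simp add: continuous_intros)
    show "indicator S \<xi> * cos 1 \<le> indicator S \<xi> * cos (?\<phi> \<xi>)" for \<xi>
      using phase[of \<xi>] cos_one_le_cos by (simp add: indicator_def)
  qed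
  also have "\<dots> = Re (integral\<^sup>L lborel (\<lambda>\<xi>. indicator S \<xi> *\<^sub>R cis (?\<phi> \<xi>)))"
    using integral_Re[OF integrable] by simp
  also have "(\<lambda>\<xi>. indicator S \<xi> *\<^sub>R cis (?\<phi> \<xi>)) = (\<lambda>\<xi>. cis (?\<phi> \<xi>) * indicator S \<xi>)"
    by (auto simp: indicator_def)
  also have "Re (integral\<^sup>L lborel \<dots>) = Re (schrod (indicator S) t x)"
    unfolding schrod_def ..
  also have "\<dots> \<le> cmod (schrod (indicator S) t x)"
    by (rule complex_Re_le_cmod)
  finally show ?thesis .
qed

lemma schrod_phase_le_one:
  fixes x \<xi> :: "'a :: real_inner"
  assumes "R > 0" "norm x \<le> 1 / (2 * R)" "0 \<le> t" "t \<le> 1 / (2 * R\<^sup>2)" "norm \<xi> \<le> R"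
  shows "\<bar>x \<bullet> \<xi> + t * (norm \<xi>)\<^sup>2\<bar> \<le> 1"
proof -
  have "\<bar>x \<bullet> \<xi>\<bar> \<le> norm x * norm \<xi>"
    by (rule Cauchy_Schwarz_ineq2)
  also have "\<dots> \<le> 1 / (2 * R) * R"
    using assms by (intro mult_mono) auto
  finally have "\<bar>x \<bullet> \<xi>\<bar> \<le> 1 / 2"
    using \<open>R > 0\<close> by simp
  moreover have "t * (norm \<xi>)\<^sup>2 \<le> 1 / (2 * R\<^sup>2) * R\<^sup>2"
    using assms by (intro mult_mono power_mono) auto
  hence "t * (norm \<xi>)\<^sup>2 \<le> 1 / 2"
    using \<open>R > 0\<close> by simp
  moreover have "0 \<le> t * (norm \<xi>)\<^sup>2"
    using \<open>0 \<le> t\<close> by simp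
  ultimately show ?thesis
    by linarith
qed

lemma schrod_max_indicator_cball_ge:
  fixes x :: "real ^ 'n"
  assumes "R \<ge> 1" and "norm x \<le> 1 / (2 * R)"
  shows "ennreal (cos 1 * unit_ball_vol CARD('n) * R ^ CARD('n))
           \<le> schrod_max (indicator (cball 0 R)) x"
proof -
  define t where "t = 1 / (2 * R\<^sup>2)"
  have "1 \<le> R\<^sup>2"
    using \<open>R \<ge> 1\<close> by (simp add: one_le_power)
  hence t: "t \<in> {0<..<1}"
    unfolding t_def by (auto simp: divide_less_eq)
  have "cos 1 * measure lborel (cball (0 :: real ^ 'n) R)
          \<le> cmod (schrod (indicator (cball 0 R)) t x)"
    using assms t by (intro cos_one_measure_le_cmod_schrod schrod_phase_le_one)
      (auto simp: t_def)
  moreover have "measure lborel (cball (0 :: real ^ 'n) R) = unit_ball_vol CARD('n) * R ^ CARD('n)"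
    using content_cball[of R "0 :: real ^ 'n"] \<open>R \<ge> 1\<close> by simp
  ultimately have "ennreal (cos 1 * unit_ball_vol CARD('n) * R ^ CARD('n))
                     \<le> ennreal (cmod (schrod (indicator (cball 0 R)) t x))"
    by (intro ennreal_leI) (simp add: mult.assoc)
  also have "\<dots> \<le> schrod_max (indicator (cball 0 R)) x"
    unfolding schrod_max_def using t by (rule SUP_upper)
  finally show ?thesis .
qed

lemma ennreal_powr_le_ennpowr:
  assumes "0 \<le> a" and "ennreal a \<le> F" and "p > 0"
  shows "ennreal (a powr p) \<le> ennpowr F p"
proof (cases F)
  case (real b)
  with assms have "a powr p \<le> b powr p"
    by (intro powr_mono2) auto
  with real show ?thesis
    by (simp add: ennpowr_def)
qed (simp add: ennpowr_def)

lemma Lp_norm_on_ge: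
  fixes F :: "'a :: euclidean_space \<Rightarrow> ennreal"
  assumes "A \<subseteq> S" "A \<in> sets lborel" "emeasure lborel A \<noteq> \<infinity>"
    and "0 \<le> a" "\<And>x. x \<in> A \<Longrightarrow> ennreal a \<le> F x" and "p > 0"
  shows "ennreal (a * measure lborel A powr (1 / p)) \<le> Lp_norm_on p S F"
proof -
  let ?I = "\<integral>\<^sup>+ x \<in> S. ennpowr (F x) p \<partial>lborel"
  have "ennreal (a powr p * measure lborel A) = ennreal (a powr p) * emeasure lborel A"
    using assms(3) by (simp add: emeasure_eq_ennreal_measure ennreal_mult)
  also have "\<dots> = (\<integral>\<^sup>+ x. ennreal (a powr p) * indicator A x \<partial>lborel)"
    by (rule nn_integral_cmult_indicator[symmetric]) (use assms(2) in simp)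
  also have "\<dots> \<le> ?I"
    using assms by (intro nn_integral_mono) (auto simp: indicator_def ennreal_powr_le_ennpowr)
  finally have "ennreal ((a powr p * measure lborel A) powr (1 / p)) \<le> ennpowr ?I (1 / p)"
    using assms by (intro ennreal_powr_le_ennpowr) auto
  also have "(a powr p * measure lborel A) powr (1 / p) = a * measure lborel A powr (1 / p)"
    using assms by (simp add: powr_mult powr_powr)
  finally show ?thesis
    unfolding Lp_norm_on_def Let_def .
qed

lemma Lp_norm_schrod_max_indicator_cball_ge:
  fixes R p :: real
  defines "n \<equiv> real CARD('n)"
  assumes "R \<ge> 1" and "p > 0"
  shows "ennreal (cos 1 * unit_ball_vol n powr (1 + 1 / p) * 2 powr (- n / p) * R powr (n - n / p))
           \<le> Lp_norm_on p (ball 0 1) (schrod_max (indicator (cball (0 :: real ^ 'n) R)))"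
proof -
  let ?V = "unit_ball_vol n"
  let ?B = "ball (0 :: real ^ 'n) (1 / (2 * R))"
  have "?V > 0"
    unfolding n_def by simp
  have "emeasure lborel ?B \<noteq> \<infinity>"
    using emeasure_ball[of "1 / (2 * R)" "0 :: real ^ 'n"] \<open>R \<ge> 1\<close> by simp
  moreover have "?B \<subseteq> ball 0 1"
    using \<open>R \<ge> 1\<close> by (intro subset_ball) simp
  ultimately have "ennreal (cos 1 * ?V * R ^ CARD('n) * measure lborel ?B powr (1 / p))
          \<le> Lp_norm_on p (ball 0 1) (schrod_max (indicator (cball (0 :: real ^ 'n) R)))"
    using assms cos_one_gt_zero \<open>?V > 0\<close> unfolding n_def
    by (intro Lp_norm_on_ge schrod_max_indicator_cball_ge) auto
  also have "measure lborel ?B = ?V * (2 * R) powr (- n)"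
    using content_ball[of "1 / (2 * R)" "0 :: real ^ 'n"] \<open>R \<ge> 1\<close>
    by (simp add: n_def powr_minus_divide powr_realpow power_one_over)
  also have "cos 1 * ?V * R ^ CARD('n) * (?V * (2 * R) powr (- n)) powr (1 / p)
               = cos 1 * (?V * ?V powr (1 / p)) * 2 powr (- n / p) * (R powr n * R powr (- n / p))"
    using \<open>R \<ge> 1\<close> \<open>?V > 0\<close>
    by (simp add: n_def powr_mult powr_powr powr_realpow)
  also have "\<dots> = cos 1 * ?V powr (1 + 1 / p) * 2 powr (- n / p) * R powr (n - n / p)"
    using \<open>R \<ge> 1\<close> \<open>?V > 0\<close> by (simp add: powr_add powr_diff powr_minus divide_inverse)
  finally show ?thesis .
qed

lemma in_Hs_indicator_compact:
  assumes "compact S"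
  shows "in_Hs s (indicator S :: real ^ 'n \<Rightarrow> complex)"
proof -
  have "(\<lambda>\<xi>. (1 + (norm \<xi>)\<^sup>2) powr s * (cmod (indicator S \<xi> :: complex))\<^sup>2)
          = (\<lambda>\<xi>. indicator S \<xi> *\<^sub>R (1 + (norm \<xi>)\<^sup>2) powr s)"
    by (auto simp: indicator_def)
  moreover have "integrable lborel (\<lambda>\<xi>. indicator S \<xi> *\<^sub>R (1 + (norm (\<xi> :: real ^ 'n))\<^sup>2) powr s)"
    using assms by (intro borel_integrable_compact continuous_intros) (auto simp: add_nonneg_eq_0_iff)
  moreover have "S \<in> sets lborel"
    using assms by (simp add: compact_imp_closed)
  ultimately show ?thesis
    unfolding in_Hs_def by simp
qed

lemma integrable_indicator_compact:
  assumes "compact S"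
  shows "integrable lborel (indicator S :: real ^ 'n \<Rightarrow> complex)"
proof -
  have "(\<lambda>\<xi>. indicator S \<xi> *\<^sub>R (1 :: complex)) = indicator S"
    by (auto simp: indicator_def)
  thus ?thesis
    using borel_integrable_compact[OF assms, of "\<lambda>_. 1 :: complex"] by simp
qed

lemma Hs_norm_indicator_cball_le:
  fixes R s :: real
  defines "n \<equiv> real CARD('n)"
  assumes "R \<ge> 1" and "s \<ge> 0"
  shows "Hs_norm s (indicator (cball (0 :: real ^ 'n) R))
           \<le> sqrt (2 powr s * unit_ball_vol n) * R powr (s + n / 2)"
proof -
  let ?S = "cball (0 :: real ^ 'n) R"
  let ?V = "unit_ball_vol n"
  have weight: "(1 + (norm \<xi>)\<^sup>2) powr s \<le> 2 powr s * R powr (2 * s)" if "\<xi> \<in> ?S" for \<xi>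
  proof -
    have "(norm \<xi>)\<^sup>2 \<le> R\<^sup>2" and "1 \<le> R\<^sup>2"
      using that \<open>R \<ge> 1\<close> by (auto intro: power_mono)
    hence "1 + (norm \<xi>)\<^sup>2 \<le> 2 * R\<^sup>2"
      by linarith
    hence "(1 + (norm \<xi>)\<^sup>2) powr s \<le> (2 * R\<^sup>2) powr s"
      using \<open>s \<ge> 0\<close> by (intro powr_mono2) (auto simp: add_pos_nonneg)
    thus ?thesis
      using \<open>R \<ge> 1\<close> by (simp add: powr_mult powr_powr flip: powr_numeral)
  qed
  have "integral\<^sup>L lborel (\<lambda>\<xi>. (1 + (norm \<xi>)\<^sup>2) powr s * (cmod (indicator ?S \<xi> :: complex))\<^sup>2)
          = integral\<^sup>L lborel (\<lambda>\<xi>. indicator ?S \<xi> *\<^sub>R (1 + (norm \<xi>)\<^sup>2) powr s)"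
    by (intro Bochner_Integration.integral_cong) (auto simp: indicator_def)
  also have "\<dots> \<le> integral\<^sup>L lborel (\<lambda>\<xi>. indicator ?S \<xi> *\<^sub>R (2 powr s * R powr (2 * s)))"
    using weight
    by (intro integral_mono borel_integrable_compact compact_cball continuous_intros)
      (auto simp: indicator_def add_nonneg_eq_0_iff)
  also have "\<dots> = 2 powr s * ?V * R powr (2 * s + n)"
    using content_cball[of R "0 :: real ^ 'n"] \<open>R \<ge> 1\<close>
    by (simp add: n_def powr_add powr_realpow)
  finally have "Hs_norm s (indicator ?S) \<le> sqrt (2 powr s * ?V * R powr (2 * s + n))"
    unfolding Hs_norm_def by (rule real_sqrt_le_mono)
  also have "\<dots> = sqrt (2 powr s * ?V) * (R powr (2 * s + n)) powr (1 / 2)"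
    using \<open>R \<ge> 1\<close> by (simp add: real_sqrt_mult powr_half_sqrt)
  also have "(R powr (2 * s + n)) powr (1 / 2) = R powr (s + n / 2)"
    by (simp add: powr_powr add_divide_distrib)
  finally show ?thesis .
qed

lemma powr_exponent_le_of_bounded:
  fixes K B a b :: real
  assumes "K > 0" and bound: "\<And>R. R \<ge> 1 \<Longrightarrow> K * R powr a \<le> B * R powr b"
  shows "a \<le> b"
proof (rule ccontr)
  assume "\<not> a \<le> b"
  have "((\<lambda>R. B * R powr (b - a)) \<longlongrightarrow> B * 0) at_top"
    using \<open>\<not> a \<le> b\<close> by (intro tendsto_mult tendsto_const tendsto_neg_powr filterlim_ident) auto
  moreover have "\<forall>\<^sub>F R in at_top. K \<le> B * R powr (b - a)"
    using eventually_ge_at_top[of "1::real"]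
  proof eventually_elim
    case (elim R)
    have "K * R powr a \<le> B * R powr (b - a) * R powr a"
      using bound[OF elim] elim by (simp add: powr_diff field_simps)
    thus ?case using elim by simp
  qed
  ultimately have "K \<le> B * 0" by (intro tendsto_lowerbound) auto
  thus False using \<open>K > 0\<close> by simp
qed

lemma maximal_estimate_exponent_le:
  fixes p s C :: real
  defines "n \<equiv> real CARD('n)"
  assumes "p > 0" and "s \<ge> 0"
    and estimate: "\<And>g :: real ^ 'n \<Rightarrow> complex. in_Hs s g \<and> integrable lborel g \<Longrightarrow>
                     Lp_norm_on p (ball 0 1) (schrod_max g) \<le> ennreal (C * Hs_norm s g)"
  shows "n - n / p \<le> s + n / 2"
proof -
  define K where "K = cos 1 * unit_ball_vol n powr (1 + 1 / p) * 2 powr (- n / p)"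
  have "unit_ball_vol n > 0"
    by (simp add: n_def)
  hence "K > 0"
    unfolding K_def using cos_one_gt_zero by (intro mult_pos_pos) auto
  moreover have "K * R powr (n - n / p) \<le> (C * sqrt (2 powr s * unit_ball_vol n)) * R powr (s + n / 2)"
    if "R \<ge> 1" for R
  proof -
    let ?g = "indicator (cball (0 :: real ^ 'n) R) :: real ^ 'n \<Rightarrow> complex"
    have lower_pos: "K * R powr (n - n / p) > 0"
      using \<open>K > 0\<close> \<open>R \<ge> 1\<close> by simp
    have "ennreal (K * R powr (n - n / p)) \<le> Lp_norm_on p (ball 0 1) (schrod_max ?g)"
      unfolding K_def n_def using \<open>R \<ge> 1\<close> \<open>p > 0\<close> by (rule Lp_norm_schrod_max_indicator_cball_ge)
    also have "\<dots> \<le> ennreal (C * Hs_norm s ?g)"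
      by (intro estimate conjI in_Hs_indicator_compact integrable_indicator_compact compact_cball)
    finally have lower: "K * R powr (n - n / p) \<le> C * Hs_norm s ?g"
      using lower_pos by (auto simp: ennreal_le_iff2)
    moreover have "Hs_norm s ?g \<ge> 0"
      unfolding Hs_norm_def by simp
    ultimately have "C \<ge> 0"
      using lower_pos by (smt (verit) mult_nonpos_nonneg)
    hence "C * Hs_norm s ?g \<le> C * (sqrt (2 powr s * unit_ball_vol n) * R powr (s + n / 2))"
      using Hs_norm_indicator_cball_le[where 'n = 'n, OF \<open>R \<ge> 1\<close> \<open>s \<ge> 0\<close>]
      unfolding n_def by (intro mult_left_mono)
    with lower show ?thesis
      by (simp add: mult.assoc)
  qed
  ultimately show ?thesis
    by (rule powr_exponent_le_of_bounded)
qed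

theorem theorem1p5:
  fixes p :: real
  assumes "p > 1"
    and "\<forall>s::real. s > real CARD('n) / (2 * (real CARD('n) + 1)) \<longrightarrow>
           (\<exists>C::real. \<forall>g :: real ^ 'n \<Rightarrow> complex.
              in_Hs s g \<and> integrable lborel g \<longrightarrow>
              Lp_norm_on p (ball 0 1) (schrod_max g) \<le> ennreal (C * Hs_norm s g))"
  shows "p \<le> 2 * (real CARD('n) + 1) / real CARD('n)"
proof -
  let ?n = "real CARD('n)"
  have "?n / 2 - ?n / p \<le> ?n / (2 * (?n + 1))"
  proof (rule dense_ge)
    fix s
    assume s: "?n / (2 * (?n + 1)) < s"
    then obtain C where "\<forall>g :: real ^ 'n \<Rightarrow> complex. in_Hs s g \<and> integrable lborel g \<longrightarrow>
                           Lp_norm_on p (ball 0 1) (schrod_max g) \<le> ennreal (C * Hs_norm s g)"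
      using assms(2) by blast
    moreover have "s \<ge> 0"
      using s by (smt (verit) divide_nonneg_pos of_nat_0_le_iff)
    ultimately have "?n - ?n / p \<le> s + ?n / 2"
      using \<open>p > 1\<close> by (intro maximal_estimate_exponent_le) auto
    thus "?n / 2 - ?n / p \<le> s"
      by simp
  qed
  hence "?n * (?n * p) \<le> ?n * (2 * (?n + 1))"
    using \<open>p > 1\<close> by (simp add: field_simps)
  hence "?n * p \<le> 2 * (?n + 1)"
    by (simp add: mult_left_le_imp_le)
  thus ?thesis
    by (simp add: field_simps)
qed

end
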